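(* In the virtually-$\mathbb{Z}$ setting described in the context, let $\Phi$ be a cellular automaton on $A^G$ with neighborhood $S$ and $\Delta=\max\{\mathrm{imp}(s):s\in S\}$. Let $x\in A^G$ be such that for every $k\in\mathbb{N}$ there exist finite sets $L_1\subseteq Br_-(V_{\{-k\}})$, $L_2\subseteq Br_+(V_{\{k\}})$ and sections $V_1\subseteq Br_-(V_{\{-k\}})$, $V_2\subseteq Br_+(V_{\{k\}})$ with $l(V_1)>\Delta$ and $l(V_2)>\Delta$, such that for $i=1,2$ the pattern $u_i=x|_{L_i}$ is $V_i$-blocking for $\Phi$. Then $x$ is an equicontinuity point of $\Phi$.
   Context: $G$ is a finitely generated group, $A$ a finite alphabet, $H\leq G$ a subgroup of finite index and $\varphi:H\to\mathbb{Z}$ a group isomorphism. $F\subseteq G$ is a finite set with $1_G\in F$ containing exactly one element of each right coset $Hg$, so every $g\in G$ decomposes uniquely as $g=zf$ with $z\in H$, $f\in F$. Define $p:G\to\mathbb{Z}$ by $p(zf)=\varphi(z)$. For $X\subseteq\mathbb{Z}$, $V_X=p^{-1}(X)$; $V_{\{k\}}$ is the $k$-th vertebra; $V_X$ is a section if $X=[a,b]$ is a finite integer interval, with length $l(V_{[a,b]})=b-a+1$, right arm $Br_+(V_{[a,b]})=V_{(b,\infty)}$ and left arm $Br_-(V_{[a,b]})=V_{(-\infty,a)}$ (so $Br_-(V_{\{-k\}})=V_{(-\infty,-k)}$, $Br_+(V_{\{k\}})=V_{(k,\infty)}$). For $s\in G$, $\mathrm{imp}(s)=\max\{|p(gs)-p(g)|:g\in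 V_{\{k\}}\}$, which is independent of $k$. A cellular automaton $\Phi$ with neighborhood $S\subseteq G$ finite and local map $\mu:A^S\to A$ is $\Phi(x)(g)=\mu(s\mapsto x(gs))$. For finite $V\subseteq G$, a pattern $u\in A^L$ ($L\subseteq G$ finite) is $V$-blocking for $\Phi$ if for all $x,y\in A^G$ with $x|_L=y|_L=u$ one has $\Phi^t(x)|_V=\Phi^t(y)|_V$ for all $t\in\mathbb{N}$. Metric: $G$ is given the generating set $F\cup\{\varphi^{-1}(1)\}$ together with inverses, with word metric $d$, and $A^G$ the Cantor metric $d^C(x,y)=2^{-k}$, $k=\min\{d(1_G,g):x(g)\neq y(g)\}$, with closed balls $B$. $x$ is an equicontinuity point of $\Phi$ if $\forall\epsilon>0\,\exists\delta>0\,\forall t\in\mathbb{N}$, $\Phi^t(B(x,\delta))\subseteq B(\Phi^t(x),\epsilon)$. *)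

theory Defs
  imports Complex_Main "HOL-Library.FuncSet"
begin

text \<open>The group G is a type of class group_add (not necessarily commutative),
written additively: gs corresponds to g + s, the identity is 0.\<close>

definition vz_setting :: "'g::group_add set \<Rightarrow> ('g \<Rightarrow> int) \<Rightarrow> 'g set \<Rightarrow> bool" where
  "vz_setting H \<phi> F \<longleftrightarrow>
     0 \<in> H \<and> (\<forall>a\<in>H. \<forall>b\<in>H. a + b \<in> H) \<and> (\<forall>a\<in>H. - a \<in> H) \<and>
     (\<forall>a\<in>H. \<forall>b\<in>H. \<phi> (a + b) = \<phi> a + \<phi> b) \<and> bij_betw \<phi> H UNIV \<and>
     finite F \<and> 0 \<in> F \<and> (\<forall>g. \<exists>!f. f \<in> F \<and> f \<in> (\<lambda>z. z + g) ` H)"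

definition proj :: "'g::group_add set \<Rightarrow> ('g \<Rightarrow> int) \<Rightarrow> 'g set \<Rightarrow> 'g \<Rightarrow> int" where
  "proj H \<phi> F g = \<phi> (THE z. z \<in> H \<and> (\<exists>f\<in>F. g = z + f))"

definition vset :: "'g::group_add set \<Rightarrow> ('g \<Rightarrow> int) \<Rightarrow> 'g set \<Rightarrow> int set \<Rightarrow> 'g set" where
  "vset H \<phi> F X = {g. proj H \<phi> F g \<in> X}"

text \<open>imp(s), computed on the 0-th vertebra (independent of k).\<close>
definition imp :: "'g::group_add set \<Rightarrow> ('g \<Rightarrow> int) \<Rightarrow> 'g set \<Rightarrow> 'g \<Rightarrow> int" where
  "imp H \<phi> F s = Max ((\<lambda>g. \<bar>proj H \<phi> F (g + s) - proj H \<phi> F g\<bar>) ` vset H \<phi> F {0})"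

definition Delta :: "'g::group_add set \<Rightarrow> ('g \<Rightarrow> int) \<Rightarrow> 'g set \<Rightarrow> 'g set \<Rightarrow> int" where
  "Delta H \<phi> F S = Max (insert 0 (imp H \<phi> F ` S))"

text \<open>Cellular automaton with neighbourhood S and local rule mu : A^S -> A
  (elements of A^S are represented as functions restricted to S).\<close>
definition ca :: "'g::group_add set \<Rightarrow> (('g \<Rightarrow> 'a) \<Rightarrow> 'a) \<Rightarrow> ('g \<Rightarrow> 'a) \<Rightarrow> 'g \<Rightarrow> 'a" where
  "ca S \<mu> x g = \<mu> (restrict (\<lambda>s. x (g + s)) S)"

definition blocking :: "(('g \<Rightarrow> 'a) \<Rightarrow> ('g \<Rightarrow> 'a)) \<Rightarrow> 'g set \<Rightarrow> ('g \<Rightarrow> 'a) \<Rightarrow> 'g set \<Rightarrow> bool" where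
  "blocking \<Phi> L u V \<longleftrightarrow>
     (\<forall>x y. (\<forall>g\<in>L. x g = u g) \<and> (\<forall>g\<in>L. y g = u g) \<longrightarrow>
        (\<forall>t::nat. \<forall>g\<in>V. (\<Phi> ^^ t) x g = (\<Phi> ^^ t) y g))"

definition gens :: "'g::group_add set \<Rightarrow> ('g \<Rightarrow> int) \<Rightarrow> 'g set \<Rightarrow> 'g set" where
  "gens H \<phi> F = (let T = F \<union> {inv_into H \<phi> 1} in T \<union> uminus ` T)"

definition wlen :: "'g::group_add set \<Rightarrow> 'g \<Rightarrow> nat" where
  "wlen Gs g = (LEAST n. \<exists>ws. length ws = n \<and> set ws \<subseteq> Gs \<and> sum_list ws = g)"

definition cdist :: "'g::group_add set \<Rightarrow> ('g \<Rightarrow> 'a) \<Rightarrow> ('g \<Rightarrow> 'a) \<Rightarrow> real" where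
  "cdist Gs x y = (if x = y then 0 else
      (1/2) ^ (LEAST k. \<exists>g. wlen Gs g = k \<and> x g \<noteq> y g))"

definition equicont_point :: "'g::group_add set \<Rightarrow> (('g \<Rightarrow> 'a) \<Rightarrow> ('g \<Rightarrow> 'a)) \<Rightarrow> ('g \<Rightarrow> 'a) \<Rightarrow> bool" where
  "equicont_point Gs \<Phi> x \<longleftrightarrow>
     (\<forall>\<epsilon>>0. \<exists>\<delta>>0. \<forall>t::nat. \<forall>y. cdist Gs x y \<le> \<delta> \<longrightarrow>
        cdist Gs ((\<Phi> ^^ t) x) ((\<Phi> ^^ t) y) \<le> \<epsilon>)"

end

theory Submission
  imports Defs
begin

(* Two blocking walls V [a1, b1] left of vertebra -k and V [a2, b2] right of vertebra k, each more
   than \<Delta> vertebrae wide, seal off the finite region V [a1, b2]: a cell strictly between the walls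
   only reads cells of the region, and on the walls the orbit is fixed by the blocking patterns.
   Hence every y that agrees with x on the patterns and on the region has the same orbit as x on
   the region, forever. As p is Lipschitz for the word metric (with constant lip, the largest
   impact of a generator), the word ball of radius N lies in the region once k \<ge> lip * N. *)

lemma blocking_agree:
  assumes "blocking \<Phi> L (restrict x L) V" "\<forall>g\<in>L. y g = x g" "g \<in> V"
  shows "(\<Phi> ^^ t) x g = (\<Phi> ^^ t) y g"
proof -
  have "\<forall>g\<in>L. x g = restrict x L g" "\<forall>g\<in>L. y g = restrict x L g"
    using assms(2) by simp_all
  then show ?thesis using assms(1,3) unfolding blocking_def by blast
qed

lemma ca_funpow_Suc: "(ca S \<mu> ^^ Suc t) x g = \<mu> (restrict (\<lambda>s. (ca S \<mu> ^^ t) x (g + s)) S)"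
  unfolding funpow.simps(2) o_apply by (rule ca_def)

lemma ca_iterates_agree_on_region:
  assumes closed: "\<And>g s. g \<in> U - B \<Longrightarrow> s \<in> S \<Longrightarrow> g + s \<in> U"
    and initial: "\<forall>g\<in>U. x g = y g"
    and boundary: "\<And>t g. g \<in> B \<Longrightarrow> (ca S \<mu> ^^ t) x g = (ca S \<mu> ^^ t) y g"
    and "g \<in> U"
  shows "(ca S \<mu> ^^ t) x g = (ca S \<mu> ^^ t) y g"
  using \<open>g \<in> U\<close>
proof (induction t arbitrary: g)
  case 0
  then show ?case using initial by simp
next
  case (Suc t)
  show ?case
  proof (cases "g \<in> B")
    case True
    then show ?thesis by (rule boundary)
  next
    case False
    with Suc.prems have "\<forall>s\<in>S. (ca S \<mu> ^^ t) x (g + s) = (ca S \<mu> ^^ t) y (g + s)"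
      using closed Suc.IH by blast
    then show ?thesis unfolding ca_funpow_Suc by (simp cong: restrict_cong)
  qed
qed

lemma cdist_le_half_power_iff:
  "cdist Gs x y \<le> (1/2) ^ N \<longleftrightarrow> (\<forall>g. wlen Gs g < N \<longrightarrow> x g = y g)"
proof (cases "x = y")
  case False
  define k where "k = (LEAST k. \<exists>g. wlen Gs g = k \<and> x g \<noteq> y g)"
  have attained: "\<exists>g. wlen Gs g = k \<and> x g \<noteq> y g"
    unfolding k_def by (rule LeastI_ex) (use False in auto)
  have minimal: "k \<le> wlen Gs g" if "x g \<noteq> y g" for g
    unfolding k_def by (rule Least_le) (use that in blast)
  have "cdist Gs x y \<le> (1/2) ^ N \<longleftrightarrow> N \<le> k"
    using False by (simp add: cdist_def k_def power_decreasing_iff)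
  then show ?thesis using attained minimal by (meson le_trans not_le)
qed (simp add: cdist_def)

lemma equicont_pointI:
  assumes "\<And>N. \<exists>R. \<forall>y t. (\<forall>g. wlen Gs g < R \<longrightarrow> x g = y g) \<longrightarrow>
                         (\<forall>g. wlen Gs g < N \<longrightarrow> (\<Phi> ^^ t) x g = (\<Phi> ^^ t) y g)"
  shows "equicont_point Gs \<Phi> x"
  unfolding equicont_point_def
proof (intro allI impI)
  fix \<epsilon> :: real assume "\<epsilon> > 0"
  then obtain N where N: "(1/2::real) ^ N < \<epsilon>"
    using real_arch_pow_inv[of \<epsilon> "1/2"] by auto
  obtain R where R: "\<forall>y t. (\<forall>g. wlen Gs g < R \<longrightarrow> x g = y g) \<longrightarrow>
                         (\<forall>g. wlen Gs g < N \<longrightarrow> (\<Phi> ^^ t) x g = (\<Phi> ^^ t) y g)"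
    using assms by blast
  have "cdist Gs ((\<Phi> ^^ t) x) ((\<Phi> ^^ t) y) \<le> \<epsilon>" if "cdist Gs x y \<le> (1/2) ^ R" for t y
  proof -
    have "cdist Gs ((\<Phi> ^^ t) x) ((\<Phi> ^^ t) y) \<le> (1/2) ^ N"
      using R that unfolding cdist_le_half_power_iff by blast
    then show ?thesis using N by simp
  qed
  then show "\<exists>\<delta>>0. \<forall>t y. cdist Gs x y \<le> \<delta> \<longrightarrow> cdist Gs ((\<Phi> ^^ t) x) ((\<Phi> ^^ t) y) \<le> \<epsilon>"
    by (intro exI[of _ "(1/2) ^ R"]) simp
qed

lemma wlen_attained:
  assumes "set ws \<subseteq> Gs" "sum_list ws = g"
  obtains ws' where "length ws' = wlen Gs g" "set ws' \<subseteq> Gs" "sum_list ws' = g"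
proof -
  have "\<exists>ws'. length ws' = wlen Gs g \<and> set ws' \<subseteq> Gs \<and> sum_list ws' = g"
    unfolding wlen_def by (rule LeastI[of _ "length ws"]) (use assms in blast)
  then show ?thesis using that by blast
qed

lemma imp_le_Delta: "finite S \<Longrightarrow> s \<in> S \<Longrightarrow> imp H \<phi> F s \<le> Delta H \<phi> F S"
  and Delta_nonneg: "finite S \<Longrightarrow> 0 \<le> Delta H \<phi> F S"
  unfolding Delta_def by simp_all

locale virtually_Z =
  fixes H :: "'g::group_add set" and \<phi> :: "'g \<Rightarrow> int" and F :: "'g set"
  assumes setting: "vz_setting H \<phi> F"
begin

abbreviation p where "p \<equiv> proj H \<phi> F"

abbreviation V where "V \<equiv> vset H \<phi> F"

lemma zero_in_H: "0 \<in> H" and add_in_H: "a \<in> H \<Longrightarrow> b \<in> H \<Longrightarrow> a + b \<in> H"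
  and neg_in_H: "a \<in> H \<Longrightarrow> - a \<in> H"
  and \<phi>_add: "a \<in> H \<Longrightarrow> b \<in> H \<Longrightarrow> \<phi> (a + b) = \<phi> a + \<phi> b"
  and \<phi>_bij: "bij_betw \<phi> H UNIV" and finite_F: "finite F" and zero_in_F: "0 \<in> F"
  and unique_coset_rep: "\<exists>!f. f \<in> F \<and> f \<in> (\<lambda>z. z + g) ` H"
  using setting unfolding vz_setting_def by auto

lemma \<phi>_zero: "\<phi> 0 = 0"
  using \<phi>_add[OF zero_in_H zero_in_H] by simp

lemma \<phi>_inj: "a \<in> H \<Longrightarrow> b \<in> H \<Longrightarrow> \<phi> a = \<phi> b \<Longrightarrow> a = b"
  using \<phi>_bij by (auto simp: bij_betw_def inj_on_def)

lemma decomposition: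
  obtains z f where "z \<in> H" "f \<in> F" "g = z + f"
proof -
  obtain f z where "f \<in> F" "z \<in> H" "f = z + g" using unique_coset_rep[of g] by blast
  moreover have "g = - z + f" using \<open>f = z + g\<close> by (simp add: add.assoc[symmetric])
  ultimately show ?thesis using that neg_in_H by blast
qed

lemma decomposition_unique:
  assumes "z1 \<in> H" "f1 \<in> F" "z2 \<in> H" "f2 \<in> F" "z1 + f1 = z2 + f2"
  shows "z1 = z2"
proof -
  have "f1 = (- z1 + z2) + f2"
    using arg_cong[OF assms(5), of "\<lambda>g. - z1 + g"] by (simp add: add.assoc)
  then have "f1 \<in> (\<lambda>z. z + f2) ` H" using assms(1,3) add_in_H neg_in_H by blast
  moreover have "f2 \<in> (\<lambda>z. z + f2) ` H" using zero_in_H by force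
  ultimately have "f1 = f2" using unique_coset_rep[of f2] assms(2,4) by blast
  then show ?thesis using assms(5) by simp
qed

lemma proj_add: "z \<in> H \<Longrightarrow> f \<in> F \<Longrightarrow> p (z + f) = \<phi> z"
  unfolding proj_def by (rule arg_cong[of _ _ \<phi>], rule the_equality)
    (auto dest: decomposition_unique)

lemma proj_inv_into: "p (inv_into H \<phi> n) = n"
proof -
  have "inv_into H \<phi> n \<in> H" "\<phi> (inv_into H \<phi> n) = n"
    using \<phi>_bij unfolding bij_betw_def by (auto intro: inv_into_into f_inv_into_f)
  then show ?thesis using proj_add[OF _ zero_in_F] by simp
qed

lemma vset_subset_iff: "V X \<subseteq> V Y \<longleftrightarrow> X \<subseteq> Y"
  unfolding vset_def by (auto dest: subsetD[of _ _ "inv_into H \<phi> _"] simp: proj_inv_into)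

lemma finite_vset_interval: "finite (V {a..b})"
proof -
  have "V {a..b} \<subseteq> (\<lambda>(z, f). z + f) ` (inv_into H \<phi> ` {a..b} \<times> F)"
  proof
    fix g assume "g \<in> V {a..b}"
    obtain z f where zf: "z \<in> H" "f \<in> F" "g = z + f" by (rule decomposition)
    then have "\<phi> z \<in> {a..b}" using \<open>g \<in> V {a..b}\<close> proj_add by (simp add: vset_def)
    moreover have "z = inv_into H \<phi> (\<phi> z)" using zf(1) \<phi>_bij by (simp add: bij_betw_def)
    ultimately show "g \<in> (\<lambda>(z, f). z + f) ` (inv_into H \<phi> ` {a..b} \<times> F)"
      using zf by force
  qed
  then show ?thesis using finite_F finite_subset by blast
qed

lemma vset_zero_subset: "V {0} \<subseteq> F"
proof
  fix g assume "g \<in> V {0}"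
  obtain z f where zf: "z \<in> H" "f \<in> F" "g = z + f" by (rule decomposition)
  then have "\<phi> z = \<phi> 0" using \<open>g \<in> V {0}\<close> proj_add \<phi>_zero by (simp add: vset_def)
  then have "z = 0" using \<phi>_inj zf(1) zero_in_H by blast
  then show "g \<in> F" using zf by simp
qed

text \<open>The impact of s is realised on the vertebra 0, which lies inside the finite set F: for
  g = z + f one has p (g + s) - p g = p (f + s) - p f.\<close>

lemma abs_proj_add_le_imp: "\<bar>p (g + s) - p g\<bar> \<le> imp H \<phi> F s"
proof -
  obtain z f where zf: "z \<in> H" "f \<in> F" "g = z + f" by (rule decomposition)
  obtain z' f' where zf': "z' \<in> H" "f' \<in> F" "f + s = z' + f'" by (rule decomposition)
  have "g + s = (z + z') + f'" using zf zf' by (simp add: add.assoc)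
  then have "p (g + s) - p g = p (f + s) - p f"
    using zf zf' proj_add proj_add[OF zero_in_H] add_in_H \<phi>_add \<phi>_zero by simp
  moreover have "f \<in> V {0}"
    using proj_add[OF zero_in_H zf(2)] \<phi>_zero by (simp add: vset_def)
  ultimately show ?thesis
    unfolding imp_def using vset_zero_subset finite_F by (intro Max_ge) (auto intro: finite_subset)
qed

lemma abs_proj_add_le_Delta:
  "finite S \<Longrightarrow> s \<in> S \<Longrightarrow> \<bar>p (g + s) - p g\<bar> \<le> Delta H \<phi> F S"
  using abs_proj_add_le_imp imp_le_Delta order_trans by blast

abbreviation Gs where "Gs \<equiv> gens H \<phi> F"

definition lip :: int where "lip = Max (imp H \<phi> F ` Gs)"

lemma finite_gens: "finite Gs"
  unfolding gens_def Let_def using finite_F by simp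

lemma sum_replicate_in_H:
  "u \<in> H \<Longrightarrow> sum_list (replicate n u) \<in> H \<and> \<phi> (sum_list (replicate n u)) = int n * \<phi> u"
  by (induction n) (auto simp: zero_in_H \<phi>_zero add_in_H \<phi>_add algebra_simps)

lemma gens_generate: "\<exists>ws. set ws \<subseteq> Gs \<and> sum_list ws = g"
proof -
  define e where "e = inv_into H \<phi> 1"
  have e: "e \<in> H" "\<phi> e = 1" "e \<in> Gs" "- e \<in> Gs"
    using \<phi>_bij unfolding e_def bij_betw_def gens_def Let_def
    by (auto intro: inv_into_into f_inv_into_f)
  have "\<phi> (- e) = - 1" using \<phi>_add[OF neg_in_H[OF e(1)] e(1)] e(2) \<phi>_zero by simp
  obtain z f where zf: "z \<in> H" "f \<in> F" "g = z + f" by (rule decomposition)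
  define u where "u = (if \<phi> z \<ge> 0 then e else - e)"
  define ws where "ws = replicate (nat \<bar>\<phi> z\<bar>) u"
  have "u \<in> H" "set ws \<subseteq> Gs" using e neg_in_H by (auto simp: u_def ws_def)
  then have "sum_list ws \<in> H" "\<phi> (sum_list ws) = \<phi> z"
    using sum_replicate_in_H[of u] e(2) \<open>\<phi> (- e) = - 1\<close> by (auto simp: ws_def u_def)
  then have "sum_list ws = z" using \<phi>_inj zf(1) by blast
  moreover have "f \<in> Gs" using zf(2) unfolding gens_def by simp
  ultimately show ?thesis using \<open>set ws \<subseteq> Gs\<close> zf(3) by (intro exI[of _ "ws @ [f]"]) auto
qed

lemma lip_nonneg: "0 \<le> lip"
proof -
  have "0 \<in> Gs" using zero_in_F unfolding gens_def by simp
  then have "imp H \<phi> F 0 \<le> lip" unfolding lip_def using finite_gens by simp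
  moreover have "0 \<le> imp H \<phi> F 0" using abs_proj_add_le_imp[of 0 0] by simp
  ultimately show ?thesis by simp
qed

lemma abs_proj_sum_list_le: "set ws \<subseteq> Gs \<Longrightarrow> \<bar>p (sum_list ws)\<bar> \<le> lip * int (length ws)"
proof (induction ws rule: rev_induct)
  case Nil
  then show ?case using proj_add[OF zero_in_H zero_in_F] \<phi>_zero by simp
next
  case (snoc w ws)
  have "imp H \<phi> F w \<le> lip" unfolding lip_def using snoc.prems finite_gens by simp
  then have "\<bar>p (sum_list ws + w) - p (sum_list ws)\<bar> \<le> lip"
    using abs_proj_add_le_imp order_trans by blast
  then show ?case using snoc by (simp add: algebra_simps)
qed

lemma abs_proj_le_wlen: "\<bar>p g\<bar> \<le> lip * int (wlen Gs g)"
proof -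
  obtain ws where "set ws \<subseteq> Gs" "sum_list ws = g" using gens_generate by blast
  then obtain ws' where "length ws' = wlen Gs g" "set ws' \<subseteq> Gs" "sum_list ws' = g"
    by (rule wlen_attained)
  then show ?thesis using abs_proj_sum_list_le by metis
qed

lemma wlen_ball_subset_vset: "{g. wlen Gs g < N} \<subseteq> V {- (lip * int N) .. lip * int N}"
proof
  fix g assume "g \<in> {g. wlen Gs g < N}"
  then have "lip * int (wlen Gs g) \<le> lip * int N" using lip_nonneg by (simp add: mult_left_mono)
  then show "g \<in> V {- (lip * int N) .. lip * int N}"
    using abs_proj_le_wlen[of g] by (simp add: vset_def abs_le_iff)
qed

lemma iterates_agree_between_walls:
  assumes "finite S"
    and wide1: "b1 - a1 + 1 > Delta H \<phi> F S" and wide2: "b2 - a2 + 1 > Delta H \<phi> F S"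
    and B1: "blocking (ca S \<mu>) L1 (restrict x L1) (V {a1..b1})"
    and B2: "blocking (ca S \<mu>) L2 (restrict x L2) (V {a2..b2})"
    and agree: "\<forall>g \<in> L1 \<union> L2 \<union> V {a1..b2}. y g = x g"
    and "g \<in> V {a1..b2}"
  shows "(ca S \<mu> ^^ t) x g = (ca S \<mu> ^^ t) y g"
proof (rule ca_iterates_agree_on_region[where B = "V {a1..b1} \<union> V {a2..b2}"])
  fix g s assume g: "g \<in> V {a1..b2} - (V {a1..b1} \<union> V {a2..b2})" and "s \<in> S"
  then have "b1 < p g" "p g < a2" "\<bar>p (g + s) - p g\<bar> \<le> Delta H \<phi> F S"
    using abs_proj_add_le_Delta[OF \<open>finite S\<close>] by (auto simp: vset_def)
  with wide1 wide2 have "a1 \<le> p (g + s) \<and> p (g + s) \<le> b2" by arith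
  then show "g + s \<in> V {a1..b2}" by (simp add: vset_def)
next
  fix t g assume "g \<in> V {a1..b1} \<union> V {a2..b2}"
  then show "(ca S \<mu> ^^ t) x g = (ca S \<mu> ^^ t) y g"
    using blocking_agree[OF B1] blocking_agree[OF B2] agree by blast
qed (use agree \<open>g \<in> V {a1..b2}\<close> in auto)

end

theorem lemma5:
  fixes H :: "'g::group_add set" and \<phi> :: "'g \<Rightarrow> int" and F :: "'g set"
    and S :: "'g set" and \<mu> :: "('g \<Rightarrow> 'a::finite) \<Rightarrow> 'a" and x :: "'g \<Rightarrow> 'a"
  assumes setting: "vz_setting H \<phi> F"
    and S_fin: "finite S"
    and hyp: "\<forall>k::nat. \<exists>L1 L2 a1 b1 a2 b2.
        finite L1 \<and> L1 \<subseteq> vset H \<phi> F {..< - int k} \<and>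
        finite L2 \<and> L2 \<subseteq> vset H \<phi> F {int k <..} \<and>
        vset H \<phi> F {a1..b1} \<subseteq> vset H \<phi> F {..< - int k} \<and>
        vset H \<phi> F {a2..b2} \<subseteq> vset H \<phi> F {int k <..} \<and>
        b1 - a1 + 1 > Delta H \<phi> F S \<and> b2 - a2 + 1 > Delta H \<phi> F S \<and>
        blocking (ca S \<mu>) L1 (restrict x L1) (vset H \<phi> F {a1..b1}) \<and>
        blocking (ca S \<mu>) L2 (restrict x L2) (vset H \<phi> F {a2..b2})"
  shows "equicont_point (gens H \<phi> F) (ca S \<mu>) x"
proof (rule equicont_pointI)
  interpret virtually_Z H \<phi> F by (rule virtually_Z.intro[OF setting])
  fix N
  define k where "k = nat (lip * int N)"
  obtain L1 L2 a1 b1 a2 b2 where L: "finite L1" "finite L2"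
    and walls: "V {a1..b1} \<subseteq> V {..< - int k}" "V {a2..b2} \<subseteq> V {int k <..}"
    and wide: "b1 - a1 + 1 > Delta H \<phi> F S" "b2 - a2 + 1 > Delta H \<phi> F S"
    and B: "blocking (ca S \<mu>) L1 (restrict x L1) (V {a1..b1})"
      "blocking (ca S \<mu>) L2 (restrict x L2) (V {a2..b2})"
    using hyp by meson
  have Delta: "0 \<le> Delta H \<phi> F S" by (rule Delta_nonneg[OF S_fin])
  have "b1 \<in> {a1..b1}" "a2 \<in> {a2..b2}" using wide Delta by auto
  then have "b1 < - int k" "int k < a2" using walls by (auto simp: vset_subset_iff)
  then have "{- (lip * int N) .. lip * int N} \<subseteq> {a1..b2}"
    using wide Delta lip_nonneg by (auto simp: k_def)
  then have ball: "wlen Gs g < N \<Longrightarrow> g \<in> V {a1..b2}" for g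
    using wlen_ball_subset_vset vset_subset_iff by blast
  obtain R where R: "\<forall>g \<in> L1 \<union> L2 \<union> V {a1..b2}. wlen Gs g < R"
    using finite_nat_set_iff_bounded[of "wlen Gs ` (L1 \<union> L2 \<union> V {a1..b2})"]
      L finite_vset_interval by auto
  show "\<exists>R. \<forall>y t. (\<forall>g. wlen Gs g < R \<longrightarrow> x g = y g) \<longrightarrow>
          (\<forall>g. wlen Gs g < N \<longrightarrow> (ca S \<mu> ^^ t) x g = (ca S \<mu> ^^ t) y g)"
    using iterates_agree_between_walls[OF S_fin wide B] ball R by (metis (full_types))
qed

end
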